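(* Let $\alpha>0$, $\nu:=\nu(\alpha)$, and let $(a_n)_{n\ge1}$ be a positive sequence with $\lim_{n\to\infty}a_ne^{-\nu n}=0$. Let $(\chi_t)_{t\ge1}$ be defined by $\chi_t:=\max\{a_t,\frac{t-1}{\alpha}\chi_1,\dots,\frac1\alpha\chi_{t-1}\}$. For $t\ge1$ and integers $i$, set $\tilde\chi_i(t):=-\infty$ if $i<0$, $\tilde\chi_0(t):=a_t$, and $\tilde\chi_i(t):=(t-i)\chi_i/\alpha$ for $1\le i\le t-1$, and define $$I_t:=\max\{i<t:\ \chi_t=\tilde\chi_i(t)\}.$$ Then $\sup_{t\ge1}(t-I_t)<\infty$.
   Context: For $\alpha>0$, let $T=T(\alpha)\in\mathbb N$ be the unique positive integer with $\frac{(T-1)^T}{T^{T-1}}<\alpha\le\frac{T^{T+1}}{(T+1)^T}$, and define $\nu(\alpha):=\frac1T\log\frac T\alpha$. *)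

theory Defs
  imports Complex_Main
begin

definition T_of :: "real \<Rightarrow> nat" where
  "T_of \<alpha> = (THE T. T \<ge> 1 \<and>
      real (T - 1) ^ T / real T ^ (T - 1) < \<alpha> \<and>
      \<alpha> \<le> real T ^ (T + 1) / real (T + 1) ^ T)"

definition nu :: "real \<Rightarrow> real" where
  "nu \<alpha> = (1 / real (T_of \<alpha>)) * ln (real (T_of \<alpha>) / \<alpha>)"

text \<open>tilde chi_i(t) for 0 <= i < t (for i < 0 it is -infinity and never
  attains the (finite) maximum chi_t, so negative indices are omitted).\<close>
definition chi_tilde :: "real \<Rightarrow> (nat \<Rightarrow> real) \<Rightarrow> (nat \<Rightarrow> real) \<Rightarrow> nat \<Rightarrow> nat \<Rightarrow> real" where
  "chi_tilde \<alpha> a chi i t = (if i = 0 then a t else real (t - i) * chi i / \<alpha>)"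

definition I_idx :: "real \<Rightarrow> (nat \<Rightarrow> real) \<Rightarrow> (nat \<Rightarrow> real) \<Rightarrow> nat \<Rightarrow> nat" where
  "I_idx \<alpha> a chi t = Max {i. i < t \<and> chi t = chi_tilde \<alpha> a chi i t}"

end

theory Submission
  imports Defs
begin

text \<open>Since \<open>\<chi>\<^sub>t \<ge> (T/\<alpha>) \<chi>\<^sub>t\<^sub>-\<^sub>T\<close>, the sequence \<open>\<chi>\<close> grows at least like \<open>e\<^sup>\<nu>\<^sup>t\<close>, so by the
  hypothesis on \<open>a\<close> eventually \<open>\<chi>\<^sub>t \<noteq> a\<^sub>t\<close> and the maximum is attained at some
  \<open>\<chi>\<^sub>t = (k/\<alpha>) \<chi>\<^sub>i\<close> with \<open>k = t - i\<close>. If \<open>k > 4\<alpha> + 1\<close>, passing through the midpoint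
  \<open>j = i + m\<close>, \<open>m = k div 2\<close>, gives \<open>\<chi>\<^sub>t \<ge> ((k - m) m / \<alpha>\<^sup>2) \<chi>\<^sub>i > (k/\<alpha>) \<chi>\<^sub>i = \<chi>\<^sub>t\<close>,
  a contradiction. Hence \<open>t - I\<^sub>t \<le> 4\<alpha> + 1\<close> for all large \<open>t\<close>.\<close>

lemma geometric_lower_bound_by_steps:
  fixes f :: "nat \<Rightarrow> real" and r c :: real and S :: nat
  assumes S: "S \<ge> 1" and r: "r \<ge> 0"
    and base: "\<And>t. 1 \<le> t \<Longrightarrow> t \<le> S \<Longrightarrow> c \<le> f t"
    and step: "\<And>t. S < t \<Longrightarrow> r * f (t - S) \<le> f t"
    and t: "t \<ge> 1"
  shows "c * r ^ ((t - 1) div S) \<le> f t"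
  using t
proof (induction t rule: less_induct)
  case (less t)
  show ?case
  proof (cases "t \<le> S")
    case True
    then have "t - 1 < S" using less.prems by linarith
    then have "(t - 1) div S = 0" by simp
    with base[OF less.prems True] show ?thesis by simp
  next
    case False
    have IH: "c * r ^ ((t - S - 1) div S) \<le> f (t - S)"
      using less.IH[of "t - S"] False S by auto
    have "t - 1 = (t - S - 1) + S" using False by auto
    then have "(t - 1) div S = Suc ((t - S - 1) div S)"
      using S by (metis div_add_self2 not_one_le_zero plus_1_eq_Suc add.commute)
    then have "c * r ^ ((t - 1) div S) = r * (c * r ^ ((t - S - 1) div S))" by simp
    also have "\<dots> \<le> r * f (t - S)" using IH r by (rule mult_left_mono)
    also have "\<dots> \<le> f t" using step False by simp
    finally show ?thesis .
  qed
qed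

lemma power_div_ge_exp:
  fixes r :: real and S t :: nat
  assumes r: "r > 0" and S: "S \<ge> 1" and t: "t \<ge> 1"
  shows "min 1 (1 / r) * exp (ln r / real S * real t) \<le> r ^ ((t - 1) div S)"
proof -
  define q where "q = (t - 1) div S"
  define d where "d = real q - real t / real S"
  have "q * S + (t - 1) mod S = t - 1" unfolding q_def by (rule div_mult_mod_eq)
  moreover have "(t - 1) mod S < S" using S by simp
  ultimately have "q * S \<le> t - 1" "t - 1 < q * S + S" by linarith+
  then have "real q * real S \<le> real t - 1" "real t \<le> real q * real S + real S"
    using t by (simp_all add: of_nat_diff flip: of_nat_mult of_nat_add)
  then have d: "-1 \<le> d" "d \<le> 0"
    unfolding d_def using S by (simp_all add: field_simps)
  have "min 1 (1 / r) \<le> r powr d"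
  proof (cases "r \<ge> 1")
    case True
    then have "r powr (-1) \<le> r powr d" using d by (intro powr_mono) auto
    then show ?thesis using r by (simp add: powr_minus_divide)
  next
    case False
    then have "r powr 0 \<le> r powr d" using d r by (intro powr_mono') auto
    then show ?thesis using r by simp
  qed
  then have "min 1 (1 / r) * r powr (real t / real S) \<le> r powr d * r powr (real t / real S)"
    by (rule mult_right_mono) simp
  also have "\<dots> = r ^ q"
    using r by (simp add: d_def powr_realpow[symmetric] powr_add[symmetric])
  finally show ?thesis
    using r by (simp add: q_def powr_def mult.commute)
qed

lemma midpoint_product_gt:
  fixes k :: nat and \<alpha> :: real
  assumes "\<alpha> > 0" and k: "real k > 4 * \<alpha> + 1"
  shows "1 \<le> k div 2" "k div 2 < k" "real k * \<alpha> < real (k - k div 2) * real (k div 2)"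
proof -
  have "k \<ge> 2" using k assms(1) by linarith
  then show "1 \<le> k div 2" "k div 2 < k" by auto
  have "real k - 1 \<le> 2 * real (k div 2)" "real k \<le> 2 * real (k - k div 2)"
    by linarith+
  then have "real k * (real k - 1) \<le> (2 * real (k - k div 2)) * (2 * real (k div 2))"
    using k assms(1) by (intro mult_mono) auto
  moreover have "(2 * x) * (2 * y) = 4 * (x * y)" for x y :: real by simp
  ultimately have "real k * (real k - 1) \<le> 4 * (real (k - k div 2) * real (k div 2))"
    by metis
  moreover have "real k * (4 * \<alpha>) < real k * (real k - 1)"
    using k assms(1) by (intro mult_strict_left_mono) auto
  ultimately show "real k * \<alpha> < real (k - k div 2) * real (k div 2)" by linarith
qed

text \<open>If \<open>T_of \<alpha> = 0\<close> (the defining \<open>THE\<close> is not used here) then \<open>nu \<alpha> = 0\<close>,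
  because \<open>1 / 0 = 0\<close>, and any integer step \<open>S \<ge> \<alpha>\<close> will do.\<close>
lemma exists_step_nu_le:
  assumes "\<alpha> > 0"
  obtains S :: nat where "S \<ge> 1" "nu \<alpha> \<le> ln (real S / \<alpha>) / real S"
proof (cases "T_of \<alpha> \<ge> 1")
  case True
  then show ?thesis by (intro that[of "T_of \<alpha>"]) (simp_all add: nu_def)
next
  case False
  define S where "S = nat \<lceil>\<alpha>\<rceil> + 1"
  have "\<alpha> \<le> real S" unfolding S_def using real_nat_ceiling_ge[of \<alpha>] by linarith
  then have "0 \<le> ln (real S / \<alpha>) / real S" using assms by simp
  moreover have "nu \<alpha> = 0" using False by (simp add: nu_def)
  ultimately show ?thesis by (intro that[of S]) (simp_all add: S_def)
qed

locale chi_recursion =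
  fixes \<alpha> :: real and a chi :: "nat \<Rightarrow> real"
  assumes alpha_pos: "\<alpha> > 0"
    and a_pos: "\<And>n. n \<ge> 1 \<Longrightarrow> a n > 0"
    and chi_def: "\<And>t. t \<ge> 1 \<Longrightarrow>
        chi t = Max ({a t} \<union> {real (t - i) / \<alpha> * chi i | i. 1 \<le> i \<and> i < t})"
begin

lemma finite_candidates: "finite ({a t} \<union> {real (t - i) / \<alpha> * chi i | i. 1 \<le> i \<and> i < t})"
  using finite_image_set[of "\<lambda>i. 1 \<le> i \<and> i < t"] by simp

lemma chi_ge_a:
  assumes "t \<ge> 1"
  shows "a t \<le> chi t"
  unfolding chi_def[OF assms] by (rule Max_ge[OF finite_candidates]) blast

lemma chi_ge_scaled:
  assumes "1 \<le> i" "i < t"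
  shows "real (t - i) / \<alpha> * chi i \<le> chi t"
proof -
  have "t \<ge> 1" using assms by simp
  show ?thesis unfolding chi_def[OF \<open>t \<ge> 1\<close>] using assms by (intro Max_ge[OF finite_candidates]) blast
qed

lemma chi_attained:
  assumes "t \<ge> 1"
  shows "chi t = a t \<or> (\<exists>i. 1 \<le> i \<and> i < t \<and> chi t = real (t - i) / \<alpha> * chi i)"
proof -
  have "Max ({a t} \<union> {real (t - i) / \<alpha> * chi i | i. 1 \<le> i \<and> i < t})
      \<in> {a t} \<union> {real (t - i) / \<alpha> * chi i | i. 1 \<le> i \<and> i < t}"
    using finite_candidates by (rule Max_in) blast
  then show ?thesis unfolding chi_def[OF assms, symmetric] by blast
qed

lemma chi_pos: "t \<ge> 1 \<Longrightarrow> chi t > 0"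
  using chi_ge_a a_pos by (meson less_le_trans)

lemma chi_exp_lower_bound: "\<exists>K>0. \<forall>t\<ge>1. K * exp (nu \<alpha> * real t) \<le> chi t"
proof -
  obtain S where S: "S \<ge> 1" and nu_le: "nu \<alpha> \<le> ln (real S / \<alpha>) / real S"
    using exists_step_nu_le[OF alpha_pos] .
  define r where "r = real S / \<alpha>"
  define c where "c = Min (a ` {1..S})"
  have r: "r > 0" unfolding r_def using S alpha_pos by simp
  have c: "c > 0" unfolding c_def using S a_pos by (subst Min_gr_iff) auto
  have geom: "c * r ^ ((t - 1) div S) \<le> chi t" if "t \<ge> 1" for t
  proof (rule geometric_lower_bound_by_steps[OF S less_imp_le[OF r] _ _ that])
    fix t assume "1 \<le> t" "t \<le> S"
    then have "c \<le> a t" unfolding c_def by (intro Min_le) auto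
    then show "c \<le> chi t" using chi_ge_a[OF \<open>1 \<le> t\<close>] by linarith
  next
    fix t assume "S < t"
    then have "real (t - (t - S)) / \<alpha> * chi (t - S) \<le> chi t"
      using S by (intro chi_ge_scaled) auto
    then show "r * chi (t - S) \<le> chi t" using \<open>S < t\<close> by (simp add: r_def)
  qed
  define K where "K = c * min 1 (1 / r)"
  have "K * exp (nu \<alpha> * real t) \<le> chi t" if "t \<ge> 1" for t
  proof -
    have "exp (nu \<alpha> * real t) \<le> exp (ln r / real S * real t)"
      using nu_le unfolding r_def by (intro exp_mono mult_right_mono) auto
    then have "K * exp (nu \<alpha> * real t) \<le> c * (min 1 (1 / r) * exp (ln r / real S * real t))"
      unfolding K_def using c r by (simp add: mult_left_mono)
    also have "\<dots> \<le> c * r ^ ((t - 1) div S)"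
      using power_div_ge_exp[OF r S that] c by (simp add: mult_left_mono)
    also have "\<dots> \<le> chi t" using geom[OF that] .
    finally show ?thesis .
  qed
  moreover have "K > 0" unfolding K_def using c r by simp
  ultimately show ?thesis by blast
qed

lemma chi_eventually_ne_a:
  assumes "(\<lambda>n. a n * exp (- nu \<alpha> * real n)) \<longlonglongrightarrow> 0"
  obtains N where "\<And>t. N \<le> t \<Longrightarrow> 1 \<le> t \<Longrightarrow> chi t \<noteq> a t"
proof -
  obtain K where K: "K > 0" and low: "\<And>t. t \<ge> 1 \<Longrightarrow> K * exp (nu \<alpha> * real t) \<le> chi t"
    using chi_exp_lower_bound by blast
  obtain N where N: "\<And>n. N \<le> n \<Longrightarrow> a n * exp (- nu \<alpha> * real n) < K"
    using order_tendstoD(2)[OF assms K] unfolding eventually_sequentially by blast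
  have "chi t \<noteq> a t" if "N \<le> t" "1 \<le> t" for t
  proof -
    have "a t < K * exp (nu \<alpha> * real t)"
      using N[OF that(1)] by (simp add: exp_minus field_simps)
    then show ?thesis using low[OF that(2)] by linarith
  qed
  then show ?thesis by (rule that)
qed

lemma attaining_gap_le:
  assumes i: "1 \<le> i" "i < t" and eq: "chi t = real (t - i) / \<alpha> * chi i"
  shows "real (t - i) \<le> 4 * \<alpha> + 1"
proof (rule ccontr)
  define k where "k = t - i"
  define m where "m = k div 2"
  assume "\<not> real (t - i) \<le> 4 * \<alpha> + 1"
  then have "real k > 4 * \<alpha> + 1" by (simp add: k_def)
  from midpoint_product_gt[OF alpha_pos this]
  have m: "1 \<le> m" "m < k" and prod: "real k * \<alpha> < real (k - m) * real m"
    unfolding m_def by auto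
  have "chi t = real k * \<alpha> * chi i / \<alpha>\<^sup>2"
    using eq alpha_pos by (simp add: k_def power2_eq_square)
  also have "\<dots> < real (k - m) * real m * chi i / \<alpha>\<^sup>2"
    using prod chi_pos[OF i(1)] alpha_pos by (intro divide_strict_right_mono mult_strict_right_mono) auto
  also have "\<dots> = real (k - m) / \<alpha> * (real m / \<alpha> * chi i)"
    by (simp add: power2_eq_square)
  also have "\<dots> \<le> real (k - m) / \<alpha> * chi (i + m)"
    using chi_ge_scaled[of i "i + m"] i alpha_pos m by (intro mult_left_mono) auto
  also have "\<dots> \<le> chi t"
    using chi_ge_scaled[of "i + m" t] i m by (simp add: k_def)
  finally show False by simp
qed


lemma I_idx_gap_le:
  assumes t: "t \<ge> 1" and ne: "chi t \<noteq> a t"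
  shows "real (t - I_idx \<alpha> a chi t) \<le> 4 * \<alpha> + 1"
proof -
  let ?A = "{i. i < t \<and> chi t = chi_tilde \<alpha> a chi i t}"
  obtain i0 where "1 \<le> i0" "i0 < t" "chi t = real (t - i0) / \<alpha> * chi i0"
    using chi_attained[OF t] ne by blast
  then have "i0 \<in> ?A" by (simp add: chi_tilde_def)
  then have "I_idx \<alpha> a chi t \<in> ?A"
    unfolding I_idx_def by (intro Max_in) auto
  then obtain i where i: "i = I_idx \<alpha> a chi t" "i < t" "chi t = chi_tilde \<alpha> a chi i t"
    by blast
  have "i \<noteq> 0"
  proof
    assume "i = 0"
    with i(3) have "chi t = a t" by (simp add: chi_tilde_def)
    with ne show False ..
  qed
  then show ?thesis
    using i by (intro attaining_gap_le) (auto simp: chi_tilde_def)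
qed

end

theorem lemma5:
  fixes \<alpha> :: real and a chi :: "nat \<Rightarrow> real"
  assumes alpha_pos: "\<alpha> > 0"
    and a_pos: "\<And>n. n \<ge> 1 \<Longrightarrow> a n > 0"
    and a_lim: "(\<lambda>n. a n * exp (- nu \<alpha> * real n)) \<longlonglongrightarrow> 0"
    and chi_def: "\<And>t. t \<ge> 1 \<Longrightarrow>
        chi t = Max ({a t} \<union> {real (t - i) / \<alpha> * chi i | i. 1 \<le> i \<and> i < t})"
  shows "\<exists>B. \<forall>t\<ge>1. t - I_idx \<alpha> a chi t \<le> B"
proof -
  interpret chi_recursion \<alpha> a chi using alpha_pos a_pos chi_def by unfold_locales
  obtain N where N: "\<And>t. N \<le> t \<Longrightarrow> 1 \<le> t \<Longrightarrow> chi t \<noteq> a t"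
    using chi_eventually_ne_a[OF a_lim] by blast
  have "t - I_idx \<alpha> a chi t \<le> max N (nat \<lceil>4 * \<alpha> + 1\<rceil>)" if t: "t \<ge> 1" for t
  proof (cases "t < N")
    case False
    then have "real (t - I_idx \<alpha> a chi t) \<le> 4 * \<alpha> + 1"
      using I_idx_gap_le N t by simp
    then show ?thesis by linarith
  qed simp
  then show ?thesis by blast
qed

end
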